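(* Let $T$ be a complete theory. If $\langle\varphi(x,y),\langle a_\eta\rangle_{\eta\in{}^{\omega>}2}\rangle$ is an antichain tree, then $\varphi(x,y)$ has TP$_2$.
   Context: Work in a monster model of $T$; ${}^{\omega>}2$ is the binary tree with initial-segment order $\trianglelefteq$. A subset $X\subseteq{}^{\omega>}2$ is an antichain if its elements are pairwise $\trianglelefteq$-incomparable. $\langle\varphi(x,y),\langle a_\eta\rangle\rangle$ is an antichain tree if for every $X\subseteq{}^{\omega>}2$, $\{\varphi(x,a_\eta):\eta\in X\}$ is consistent iff $X$ is an antichain. $\varphi(x,y)$ has TP$_2$ if there is an array $\langle b_{i,j}\rangle_{i,j<\omega}$ such that $\{\varphi(x,b_{i,j}):j<\omega\}$ is 2-inconsistent for each $i<\omega$ and $\{\varphi(x,b_{i,f(i)}):i<\omega\}$ is consistent for every $f:\omega\to\omega$. *)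

theory Defs
  imports "HOL-Library.Sublist"
begin

text \<open>The monster model is represented by types: 'x is the
sort of (tuples of) elements realising the object variable x, 'y the sort of
parameter tuples for y.  A partitioned formula phi(x,y) is represented by its
interpretation in the monster model, a relation  phi :: 'x => 'y => bool.
A set of instances {phi(x,b) : b in B} is consistent iff it is finitely
satisfiable in the monster model (equivalently, by compactness, consistent
with the elementary diagram of the monster).\<close>

definition consistent_inst :: "('x \<Rightarrow> 'y \<Rightarrow> bool) \<Rightarrow> 'y set \<Rightarrow> bool" where
  "consistent_inst \<phi> B \<longleftrightarrow> (\<forall>F. F \<subseteq> B \<and> finite F \<longrightarrow> (\<exists>x. \<forall>b\<in>F. \<phi> x b))"

text \<open>The binary tree of finite sequences: bool lists, ordered by the prefix order.\<close>

definition antichain :: "bool list set \<Rightarrow> bool" where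
  "antichain X \<longleftrightarrow> (\<forall>\<eta>\<in>X. \<forall>\<nu>\<in>X. \<eta> \<noteq> \<nu> \<longrightarrow> \<not> prefix \<eta> \<nu>)"

definition antichain_tree :: "('x \<Rightarrow> 'y \<Rightarrow> bool) \<Rightarrow> (bool list \<Rightarrow> 'y) \<Rightarrow> bool" where
  "antichain_tree \<phi> a \<longleftrightarrow> (\<forall>X. consistent_inst \<phi> (a ` X) \<longleftrightarrow> antichain X)"

definition has_TP2 :: "('x \<Rightarrow> 'y \<Rightarrow> bool) \<Rightarrow> bool" where
  "has_TP2 \<phi> \<longleftrightarrow> (\<exists>b :: nat \<Rightarrow> nat \<Rightarrow> 'y.
     (\<forall>i j k. j \<noteq> k \<longrightarrow> \<not> (\<exists>x. \<phi> x (b i j) \<and> \<phi> x (b i k))) \<and>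
     (\<forall>f :: nat \<Rightarrow> nat. consistent_inst \<phi> {b i (f i) | i. True}))"

end

theory Submission
  imports Defs
begin

text \<open>In the comb of nodes 1^i 0^(j+1) (row i, column j), each row is a chain, while
nodes from distinct rows are incomparable. Comparable nodes of an antichain tree carry
inconsistent instances, so each row is 2-inconsistent; a choice of one node per row is
an antichain, so its instances are consistent.\<close>

definition comb_node :: "nat \<Rightarrow> nat \<Rightarrow> bool list" where
  "comb_node i j = replicate i True @ replicate (Suc j) False"

lemma prefix_replicate_iff: "prefix (replicate m x) (replicate n x) \<longleftrightarrow> m \<le> n"
proof (induction m arbitrary: n)
  case (Suc m)
  then show ?case by (cases n) auto
qed simp

lemma prefix_comb_node_iff: "prefix (comb_node i j) (comb_node i' j') \<longleftrightarrow> i = i' \<and> j \<le> j'"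
proof (induction i arbitrary: i')
  case 0
  then show ?case
    by (cases i') (auto simp: comb_node_def prefix_replicate_iff)
next
  case (Suc i)
  then show ?case by (cases i') (auto simp: comb_node_def)
qed

lemma comb_node_eq_iff: "comb_node i j = comb_node i' j' \<longleftrightarrow> i = i' \<and> j = j'"
  by (metis prefix_comb_node_iff prefix_order.eq_iff le_antisym order_refl)

lemma antichain_comb_node_choice: "antichain (range (\<lambda>i. comb_node i (f i)))"
  unfolding antichain_def by (auto simp: prefix_comb_node_iff)

lemma antichain_tree_comparable_inconsistent:
  assumes "antichain_tree \<phi> a" and "prefix \<eta> \<nu>" and "\<eta> \<noteq> \<nu>"
  shows "\<not> (\<exists>x. \<phi> x (a \<eta>) \<and> \<phi> x (a \<nu>))"
proof
  assume "\<exists>x. \<phi> x (a \<eta>) \<and> \<phi> x (a \<nu>)"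
  then have "consistent_inst \<phi> (a ` {\<eta>, \<nu>})"
    unfolding consistent_inst_def by blast
  then have "antichain {\<eta>, \<nu>}"
    using assms(1) unfolding antichain_tree_def by blast
  with assms(2,3) show False
    unfolding antichain_def by blast
qed

lemma antichain_tree_row_inconsistent:
  assumes "antichain_tree \<phi> a" and "j \<noteq> k"
  shows "\<not> (\<exists>x. \<phi> x (a (comb_node i j)) \<and> \<phi> x (a (comb_node i k)))"
proof -
  have "comb_node i j \<noteq> comb_node i k"
    using assms(2) by (simp add: comb_node_eq_iff)
  moreover have "prefix (comb_node i j) (comb_node i k) \<or> prefix (comb_node i k) (comb_node i j)"
    by (simp add: prefix_comb_node_iff nat_le_linear)
  ultimately show ?thesis
    using antichain_tree_comparable_inconsistent[OF assms(1)] by metis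
qed

theorem proposition4p6:
  fixes \<phi> :: "'x \<Rightarrow> 'y \<Rightarrow> bool" and a :: "bool list \<Rightarrow> 'y"
  assumes "antichain_tree \<phi> a"
  shows "has_TP2 \<phi>"
  unfolding has_TP2_def
proof (intro exI[of _ "\<lambda>i j. a (comb_node i j)"] conjI allI impI)
  fix i j k :: nat
  assume "j \<noteq> k"
  then show "\<not> (\<exists>x. \<phi> x (a (comb_node i j)) \<and> \<phi> x (a (comb_node i k)))"
    using antichain_tree_row_inconsistent[OF assms] by blast
next
  fix f :: "nat \<Rightarrow> nat"
  have "consistent_inst \<phi> (a ` range (\<lambda>i. comb_node i (f i)))"
    using assms antichain_comb_node_choice unfolding antichain_tree_def by blast
  moreover have "{a (comb_node i (f i)) | i. True} = a ` range (\<lambda>i. comb_node i (f i))"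
    by auto
  ultimately show "consistent_inst \<phi> {a (comb_node i (f i)) | i. True}"
    by simp
qed

end
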